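(* Let $T>0$ and let $\mathbf{v}=(v^1,v^2,v^3):[0,\infty)\times[0,T]\to\mathbb{R}^3$ be a smooth solution (all derivatives continuous up to $s=0$) of the initial-boundary value problem \[ \mathbf{v}_t=\mathbf{v}\times\mathbf{v}_{ss}\ (s>0,\ t>0),\qquad \mathbf{v}(s,0)=\mathbf{v}_0(s)\ (s>0),\qquad \mathbf{v}(0,t)=\mathbf{e}_3\ (t>0), \] where $\mathbf{e}_3=(0,0,1)$ and the initial datum satisfies $|\mathbf{v}_0(s)|=1$ for all $s\ge 0$. Then for every $n\in\mathbb{N}=\{1,2,\dots\}$ and every $t\in(0,T]$: \[ (C)_n:\quad \bigl(\mathbf{v}\times\partial_s^{2n}\mathbf{v}\bigr)\big|_{s=0}=\mathbf{0}, \] \[ (D)_n:\quad \bigl(\partial_s^{j}\mathbf{v}\cdot\partial_s^{l}\mathbf{v}\bigr)\big|_{s=0}=0\quad\text{for all nonnegative integers } j,l \text{ with } j+l=2n+1. \]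
   Context: $\times$ denotes the exterior (cross) product in $\mathbb{R}^3$ and $\cdot$ the Euclidean inner product; $|_{s=0}$ denotes the trace at $s=0$. *)

theory Defs
  imports "HOL-Analysis.Analysis"
begin

end

theory Submission
  imports Defs
begin

text \<open>The unit length of \<open>v\<close> is conserved by the flow, because \<open>v \<bullet> (v \<times> v\<^sub>s\<^sub>s) = 0\<close>;
  hence every \<open>s\<close>-derivative of \<open>|v|\<^sup>2\<close> vanishes. At \<open>s = 0\<close>, where \<open>v = e\<^sub>3\<close>, one shows by
  induction on the order that even \<open>s\<close>-derivatives of \<open>v\<close> are parallel to \<open>e\<^sub>3\<close> and odd ones
  are orthogonal to it. For odd order \<open>m\<close>, the Leibniz expansion of \<open>\<partial>\<^sub>s\<^sup>m |v|\<^sup>2 = 0\<close> reduces by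
  parity to \<open>2 e\<^sub>3 \<bullet> \<partial>\<^sub>s\<^sup>m v = 0\<close>. For even order \<open>j + 2\<close>, the horizontal part of \<open>\<partial>\<^sub>t \<partial>\<^sub>s\<^sup>j v\<close>
  vanishes at \<open>s = 0\<close> since \<open>\<partial>\<^sub>s\<^sup>j v(0,\<cdot>)\<close> stays vertical, while the \<open>j\<close>-fold \<open>s\<close>-derivative of
  the equation reduces by parity to \<open>\<partial>\<^sub>t \<partial>\<^sub>s\<^sup>j v = e\<^sub>3 \<times> \<partial>\<^sub>s\<^sup>j\<^sup>+\<^sup>2 v\<close> modulo vertical vectors.\<close>

lemma binomial_Pascal_sum:
  fixes h :: "nat \<Rightarrow> nat \<Rightarrow> 'a::real_vector"
  shows "(\<Sum>i\<le>m. real (m choose i) *\<^sub>R (h i (Suc (m - i)) + h (Suc i) (m - i)))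
       = (\<Sum>i\<le>Suc m. real (Suc m choose i) *\<^sub>R h i (Suc m - i))"
proof -
  have rhs: "(\<Sum>i\<le>Suc m. real (Suc m choose i) *\<^sub>R h i (Suc m - i))
     = h 0 (Suc m) + (\<Sum>i\<le>m. real (m choose i) *\<^sub>R h (Suc i) (m - i))
        + (\<Sum>i\<le>m. real (m choose Suc i) *\<^sub>R h (Suc i) (m - i))"
    by (subst sum.atMost_Suc_shift) (simp del: sum.atMost_Suc add: sum.distrib scaleR_add_left)
  have first: "(\<Sum>i\<le>m. real (m choose i) *\<^sub>R h i (Suc (m - i)))
     = h 0 (Suc m) + (\<Sum>i<m. real (m choose Suc i) *\<^sub>R h (Suc i) (m - i))"
    by (simp add: sum.atMost_shift Suc_diff_Suc)
  have last: "(\<Sum>i\<le>m. real (m choose Suc i) *\<^sub>R h (Suc i) (m - i))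
     = (\<Sum>i<m. real (m choose Suc i) *\<^sub>R h (Suc i) (m - i))"
    by (simp add: lessThan_Suc_atMost[symmetric])
  show ?thesis using rhs first last by (simp add: sum.distrib scaleR_add_right)
qed

lemma has_vector_derivative_Leibniz:
  fixes f :: "nat \<Rightarrow> real \<Rightarrow> 'a::real_normed_vector"
    and g :: "nat \<Rightarrow> real \<Rightarrow> 'b::real_normed_vector"
    and prod :: "'a \<Rightarrow> 'b \<Rightarrow> 'c::real_normed_vector"
  assumes prod: "bounded_bilinear prod"
    and f: "\<And>i y. y \<in> S \<Longrightarrow> (f i has_vector_derivative f (Suc i) y) (at y within S)"
    and g: "\<And>i y. y \<in> S \<Longrightarrow> (g i has_vector_derivative g (Suc i) y) (at y within S)"
    and x: "x \<in> S"
  shows "((\<lambda>y. \<Sum>i\<le>m. real (m choose i) *\<^sub>R prod (f i y) (g (m - i) y)) has_vector_derivative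
           (\<Sum>i\<le>Suc m. real (Suc m choose i) *\<^sub>R prod (f i x) (g (Suc m - i) x))) (at x within S)"
proof -
  have "((\<lambda>y. \<Sum>i\<le>m. real (m choose i) *\<^sub>R prod (f i y) (g (m - i) y)) has_vector_derivative
      (\<Sum>i\<le>m. real (m choose i) *\<^sub>R
          (prod (f i x) (g (Suc (m - i)) x) + prod (f (Suc i) x) (g (m - i) x)))) (at x within S)"
    by (intro has_vector_derivative_sum bounded_linear.has_vector_derivative[OF bounded_linear_scaleR_right]
        bounded_bilinear.has_vector_derivative[OF prod] f g x)
  then show ?thesis
    using binomial_Pascal_sum[of m "\<lambda>i j. prod (f i x) (g j x)"] by simp
qed

lemma has_vector_derivative_unique_on:
  fixes f g :: "real \<Rightarrow> 'a::real_normed_vector"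
  assumes f: "(f has_vector_derivative f') (at x within S)"
    and g: "(g has_vector_derivative g') (at x within S)"
    and U: "U \<subseteq> S" "x \<in> U" "at x within U \<noteq> bot"
    and eq: "\<And>y. y \<in> U \<Longrightarrow> f y = g y"
  shows "f' = g'"
proof (rule vector_derivative_unique_within[OF U(3)])
  show "(f has_vector_derivative f') (at x within U)"
    using has_vector_derivative_within_subset[OF f U(1)] .
  show "(f has_vector_derivative g') (at x within U)"
    using eq by (rule has_vector_derivative_transform[OF U(2) _ has_vector_derivative_within_subset[OF g U(1)]])
qed

lemma continuous_within_atLeast_endpoint_eq:
  fixes f g :: "real \<Rightarrow> 'a::real_normed_vector"
  assumes f: "continuous (at a within {a..}) f" and g: "continuous (at a within {a..}) g"
    and eq: "\<And>y. y > a \<Longrightarrow> f y = g y"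
  shows "f a = g a"
proof -
  have "(f \<longlongrightarrow> f a) (at_right a)" "(g \<longlongrightarrow> g a) (at_right a)"
    using continuous_within_subset[OF f, of "{a..a+1}"] continuous_within_subset[OF g, of "{a..a+1}"]
    by (simp_all add: at_within_Icc_at_right continuous_within)
  moreover have "eventually (\<lambda>y. g y = f y) (at_right a)"
    using eventually_at_right_less[of a] eq by (auto elim: eventually_mono)
  ultimately show ?thesis
    using Lim_transform_eventually tendsto_unique[OF trivial_limit_at_right_real] by metis
qed

lemma derivative_towers_eq:
  fixes f g :: "nat \<Rightarrow> real \<Rightarrow> 'a::real_normed_vector"
  assumes f: "\<And>i y. y \<ge> a \<Longrightarrow> (f i has_vector_derivative f (Suc i) y) (at y within {a..})"
    and g: "\<And>i y. y \<ge> a \<Longrightarrow> (g i has_vector_derivative g (Suc i) y) (at y within {a..})"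
    and eq: "\<And>y. y > a \<Longrightarrow> f 0 y = g 0 y"
    and x: "x \<ge> a"
  shows "f k x = g k x"
proof -
  have interior: "\<forall>y>a. f k y = g k y"
  proof (induction k)
    case 0
    show ?case using eq by blast
  next
    case (Suc k)
    show ?case
    proof (intro allI impI)
      fix y :: real assume "y > a"
      then show "f (Suc k) y = g (Suc k) y"
        using Suc.IH
        by (intro has_vector_derivative_unique_on[OF f g, of y "{y..y+1}"])
           (auto simp: at_within_Icc_at_right)
    qed
  qed
  show ?thesis
  proof (cases "x = a")
    case True
    then show ?thesis
      using interior f[of a k] g[of a k]
      by (auto intro: continuous_within_atLeast_endpoint_eq has_vector_derivative_continuous)
  next
    case False
    then show ?thesis using interior x by simp
  qed
qed

abbreviation e3 :: "real^3" where "e3 \<equiv> vector [0, 0, 1]"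

definition vertical :: "(real^3) set" where "vertical = {x. x$1 = 0 \<and> x$2 = 0}"

definition horizontal :: "(real^3) set" where "horizontal = {x. x$3 = 0}"

definition parity_aligned :: "nat \<Rightarrow> real^3 \<Rightarrow> bool" where
  "parity_aligned i x \<longleftrightarrow> x \<in> (if even i then vertical else horizontal)"

lemma subspace_vertical: "subspace vertical"
  by (auto simp: subspace_def vertical_def)

lemma inner_e3: "e3 \<bullet> x = x$3" "x \<bullet> e3 = x$3"
  by (simp_all add: inner_vec_def sum_3)

lemma cross3_e3_eq_0_iff: "cross3 e3 y = 0 \<longleftrightarrow> y \<in> vertical"
  by (auto simp: vertical_def cross3_simps vec_eq_iff forall_3)

lemma cross3_e3_in_vertical_iff: "cross3 e3 y \<in> vertical \<longleftrightarrow> y \<in> vertical"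
  by (auto simp: vertical_def cross3_simps)

lemma inner_eq_0_if_odd_parity:
  assumes "parity_aligned i x" "parity_aligned j y" "odd (i + j)"
  shows "x \<bullet> y = 0"
  using assms by (auto simp: parity_aligned_def vertical_def horizontal_def inner_vec_def sum_3)

lemma cross3_in_vertical_if_even_parity:
  assumes "parity_aligned i x" "parity_aligned j y" "even (i + j)"
  shows "cross3 x y \<in> vertical"
  using assms by (auto simp: parity_aligned_def vertical_def horizontal_def cross3_simps)

text \<open>\<open>D j k s t\<close> stands for \<open>\<partial>\<^sub>s\<^sup>j \<partial>\<^sub>t\<^sup>k v(s, t)\<close>.\<close>

locale schroedinger_map_ibvp =
  fixes T :: real
    and v :: "real \<Rightarrow> real \<Rightarrow> real^3"
    and v0 :: "real \<Rightarrow> real^3"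
    and D :: "nat \<Rightarrow> nat \<Rightarrow> real \<Rightarrow> real \<Rightarrow> real^3"
  assumes T_pos: "T > 0"
    and D00: "\<And>s t. s \<ge> 0 \<Longrightarrow> t \<in> {0..T} \<Longrightarrow> D 0 0 s t = v s t"
    and D_s: "\<And>j k s t. s \<ge> 0 \<Longrightarrow> t \<in> {0..T} \<Longrightarrow>
               ((\<lambda>\<sigma>. D j k \<sigma> t) has_vector_derivative D (Suc j) k s t) (at s within {0..})"
    and D_t: "\<And>j k s t. s \<ge> 0 \<Longrightarrow> t \<in> {0..T} \<Longrightarrow>
               ((\<lambda>\<tau>. D j k s \<tau>) has_vector_derivative D j (Suc k) s t) (at t within {0..T})"
    and pde: "\<And>s t. s > 0 \<Longrightarrow> t \<in> {0<..T} \<Longrightarrow> D 0 1 s t = cross3 (v s t) (D 2 0 s t)"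
    and init: "\<And>s. s > 0 \<Longrightarrow> v s 0 = v0 s"
    and bdry: "\<And>t. t \<in> {0<..T} \<Longrightarrow> v 0 t = e3"
    and unit: "\<And>s. s \<ge> 0 \<Longrightarrow> norm (v0 s) = 1"
begin

lemma boundary_value: "t \<in> {0<..T} \<Longrightarrow> D 0 0 0 t = e3"
  using D00[of 0 t] bdry[of t] by auto

lemma unit_length:
  assumes s: "s \<ge> 0" and t: "t \<in> {0<..T}"
  shows "D 0 0 s t \<bullet> D 0 0 s t = 1"
proof (cases "s = 0")
  case True
  then show ?thesis using boundary_value[OF t] by (simp add: inner_e3)
next
  case False
  with s have s_pos: "s > 0" by simp
  define h where "h \<tau> = D 0 0 s \<tau> \<bullet> D 0 0 s \<tau>" for \<tau>
  have h_deriv: "(h has_vector_derivative D 0 0 s \<tau> \<bullet> D 0 1 s \<tau> + D 0 1 s \<tau> \<bullet> D 0 0 s \<tau>)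
      (at \<tau> within {0..T})"
    if "\<tau> \<in> {0..T}" for \<tau>
    unfolding h_def
    using bounded_bilinear.has_vector_derivative[OF bounded_bilinear_inner
        D_t[OF s that, of 0 0] D_t[OF s that, of 0 0]]
    by simp
  have "D 0 0 s \<tau> \<bullet> D 0 1 s \<tau> = 0" if "\<tau> \<in> {0<..T}" for \<tau>
    using pde[OF s_pos that] D00[OF s, of \<tau>] that by (simp add: dot_cross_self)
  then have const: "DERIV h \<tau> :> 0" if "0 < \<tau>" "\<tau> < t" for \<tau>
    using h_deriv[of \<tau>] that t at_within_Icc_at[of 0 \<tau> T]
    by (simp add: has_real_derivative_iff_has_vector_derivative inner_commute)
  have "continuous_on {0..T} h"
    using h_deriv has_vector_derivative_continuous continuous_on_eq_continuous_within by blast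
  then have "continuous_on {0..t} h"
    using t by (auto intro: continuous_on_subset)
  then have "h t = h 0"
    using t const by (intro DERIV_isconst_end) auto
  moreover have "h 0 = 1"
    using D00[OF s, of 0] init[OF s_pos] unit[OF s] T_pos
    by (simp add: h_def power2_norm_eq_inner[symmetric])
  ultimately show ?thesis by (simp add: h_def)
qed

lemma Leibniz_unit_length_eq_0:
  assumes "m \<ge> 1" "t \<in> {0<..T}" "s \<ge> 0"
  shows "(\<Sum>i\<le>m. real (m choose i) * (D i 0 s t \<bullet> D (m - i) 0 s t)) = 0"
proof -
  from assms(1) obtain k where m: "m = Suc k" by (cases m) auto
  have tT: "t \<in> {0..T}" using assms(2) by auto
  define S where "S m \<sigma> = (\<Sum>i\<le>m. real (m choose i) *\<^sub>R (D i 0 \<sigma> t \<bullet> D (m - i) 0 \<sigma> t))"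
    for m \<sigma>
  define constant_one where "constant_one (i::nat) = (\<lambda>_::real. if i = 0 then 1 else 0 :: real)" for i
  have "S (Suc k) s = constant_one (Suc k) s"
  proof (rule derivative_towers_eq[where f = S and g = constant_one and a = 0])
    show "(S i has_vector_derivative S (Suc i) \<sigma>) (at \<sigma> within {0..})" if "\<sigma> \<ge> 0" for i \<sigma>
      unfolding S_def using D_s tT that
      by (intro has_vector_derivative_Leibniz[OF bounded_bilinear_inner, where f = "\<lambda>i \<sigma>. D i 0 \<sigma> t"])
         auto
    show "(constant_one i has_vector_derivative constant_one (Suc i) \<sigma>) (at \<sigma> within {0..})" for i \<sigma>
      by (simp add: constant_one_def)
    show "S 0 \<sigma> = constant_one 0 \<sigma>" if "\<sigma> > 0" for \<sigma>
      using unit_length[of \<sigma> t] that assms(2) by (simp add: S_def constant_one_def)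
  qed (use assms(3) in auto)
  then show ?thesis using m by (simp add: S_def constant_one_def)
qed

lemma differentiated_pde:
  assumes s: "s \<ge> 0" and t: "t \<in> {0<..T}"
  shows "D j 1 s t = (\<Sum>i\<le>j. real (j choose i) *\<^sub>R cross3 (D i 0 s t) (D (j - i + 2) 0 s t))"
proof (rule derivative_towers_eq[where a = 0 and f = "\<lambda>j \<sigma>. D j 1 \<sigma> t"
    and g = "\<lambda>j \<sigma>. \<Sum>i\<le>j. real (j choose i) *\<^sub>R cross3 (D i 0 \<sigma> t) (D (j - i + 2) 0 \<sigma> t)",
    OF _ _ _ s])
  have tT: "t \<in> {0..T}" using t by auto
  then show "((\<lambda>\<sigma>. D j 1 \<sigma> t) has_vector_derivative D (Suc j) 1 \<sigma> t) (at \<sigma> within {0..})"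
    if "\<sigma> \<ge> 0" for j \<sigma>
    using D_s that by simp
  show "((\<lambda>\<sigma>. \<Sum>i\<le>j. real (j choose i) *\<^sub>R cross3 (D i 0 \<sigma> t) (D (j - i + 2) 0 \<sigma> t))
      has_vector_derivative
        (\<Sum>i\<le>Suc j. real (Suc j choose i) *\<^sub>R cross3 (D i 0 \<sigma> t) (D (Suc j - i + 2) 0 \<sigma> t)))
      (at \<sigma> within {0..})" if "\<sigma> \<ge> 0" for j \<sigma>
    using D_s tT that
    by (intro has_vector_derivative_Leibniz[OF bilinear_cross[unfolded bilinear_conv_bounded_bilinear],
          where f = "\<lambda>i \<sigma>. D i 0 \<sigma> t" and g = "\<lambda>i \<sigma>. D (i + 2) 0 \<sigma> t"]) auto
  show "D 0 1 \<sigma> t = (\<Sum>i\<le>0. real (0 choose i) *\<^sub>R cross3 (D i 0 \<sigma> t) (D (0 - i + 2) 0 \<sigma> t))"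
    if "\<sigma> > 0" for \<sigma>
    using pde[OF that t] D00[of \<sigma> t] that tT by (simp add: numeral_2_eq_2)
qed

lemma time_derivative_vertical_at_boundary:
  assumes vert: "\<And>\<tau>. \<tau> \<in> {0<..T} \<Longrightarrow> D j 0 0 \<tau> \<in> vertical" and t: "t \<in> {0<..T}"
  shows "D j 1 0 t \<in> vertical"
proof -
  have "D j 1 0 t $ c = 0" if "c = 1 \<or> c = 2" for c
  proof (rule has_vector_derivative_unique_on[where g = "\<lambda>_. 0" and U = "{t/2..t}"])
    show "((\<lambda>\<tau>. D j 0 0 \<tau> $ c) has_vector_derivative D j 1 0 t $ c) (at t within {0..T})"
      using bounded_linear.has_vector_derivative[OF bounded_linear_vec_nth D_t[of 0 t j 0]] t by simp
    show "D j 0 0 \<tau> $ c = 0" if "\<tau> \<in> {t/2..t}" for \<tau>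
      using vert[of \<tau>] that t \<open>c = 1 \<or> c = 2\<close> by (auto simp: vertical_def)
  qed (use t in \<open>auto simp: at_within_Icc_at_left\<close>)
  then show ?thesis by (simp add: vertical_def)
qed

lemma odd_derivative_horizontal:
  assumes IH: "\<And>i t. i < m \<Longrightarrow> t \<in> {0<..T} \<Longrightarrow> parity_aligned i (D i 0 0 t)"
    and m: "odd m" and t: "t \<in> {0<..T}"
  shows "D m 0 0 t \<in> horizontal"
proof -
  let ?f = "\<lambda>i. real (m choose i) * (D i 0 0 t \<bullet> D (m - i) 0 0 t)"
  have "?f i = 0" if "i \<in> {..m} - {0, m}" for i
  proof -
    from that have "i < m" "m - i < m" "i + (m - i) = m" by auto
    then show ?thesis
      using inner_eq_0_if_odd_parity[OF IH[OF _ t] IH[OF _ t], of i "m - i"] m by simp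
  qed
  then have "(\<Sum>i\<le>m. ?f i) = (\<Sum>i\<in>{0, m}. ?f i)"
    by (intro sum.mono_neutral_right) auto
  also have "\<dots> = 2 * D m 0 0 t $ 3"
    using boundary_value[OF t] m by (simp add: inner_e3 odd_pos[THEN gr_implies_not0])
  finally show ?thesis
    using Leibniz_unit_length_eq_0[of m t 0] odd_pos[OF m] t by (simp add: horizontal_def)
qed

lemma even_derivative_vertical:
  assumes IH: "\<And>i t. i < j + 2 \<Longrightarrow> t \<in> {0<..T} \<Longrightarrow> parity_aligned i (D i 0 0 t)"
    and j: "even j" and t: "t \<in> {0<..T}"
  shows "D (j + 2) 0 0 t \<in> vertical"
proof -
  let ?g = "\<lambda>i. real (j choose i) *\<^sub>R cross3 (D i 0 0 t) (D (j - i + 2) 0 0 t)"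
  have time_deriv: "D j 1 0 t \<in> vertical"
    using IH[of j] j by (intro time_derivative_vertical_at_boundary t) (auto simp: parity_aligned_def)
  have "cross3 (D i 0 0 t) (D (j - i + 2) 0 0 t) \<in> vertical" if "i \<in> {1..j}" for i
  proof -
    from that j have "i < j + 2" "j - i + 2 < j + 2" "even (i + (j - i + 2))" by auto
    then show ?thesis using cross3_in_vertical_if_even_parity[OF IH[OF _ t] IH[OF _ t]] by blast
  qed
  then have rest: "(\<Sum>i\<in>{1..j}. ?g i) \<in> vertical"
    by (intro subspace_sum subspace_mul subspace_vertical)
  have "D j 1 0 t = ?g 0 + (\<Sum>i\<in>{1..j}. ?g i)"
    using differentiated_pde[of 0 t j] t by (simp add: atMost_atLeast0 sum.atLeast_Suc_atMost)
  then have "?g 0 = D j 1 0 t - (\<Sum>i\<in>{1..j}. ?g i)"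
    by (simp add: algebra_simps)
  then have "?g 0 \<in> vertical"
    using subspace_diff[OF subspace_vertical time_deriv rest] by simp
  then show ?thesis
    using boundary_value[OF t] by (simp add: cross3_e3_in_vertical_iff)
qed

lemma boundary_derivatives_parity_aligned:
  "t \<in> {0<..T} \<Longrightarrow> parity_aligned i (D i 0 0 t)"
proof (induction i arbitrary: t rule: less_induct)
  case (less i)
  consider "i = 0" | "odd i" | j where "even j" "i = j + 2"
  proof (cases "i = 0 \<or> odd i")
    case False
    then have "even (i - 2)" "i = i - 2 + 2" by auto
    with that(3) show ?thesis by blast
  qed (use that in blast)
  then show ?case
  proof cases
    case 1
    then show ?thesis
      using boundary_value[OF less.prems] by (simp add: parity_aligned_def vertical_def)
  next
    case 2
    then have "D i 0 0 t \<in> horizontal"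
      using less by (intro odd_derivative_horizontal) auto
    with 2 show ?thesis by (simp add: parity_aligned_def)
  next
    case 3
    with less have "D (j + 2) 0 0 t \<in> vertical"
      by (intro even_derivative_vertical) auto
    with 3 show ?thesis by (simp add: parity_aligned_def)
  qed
qed

end

theorem lemma3p1:
  fixes T :: real
    and v :: "real \<Rightarrow> real \<Rightarrow> real^3"
    and v0 :: "real \<Rightarrow> real^3"
    and D :: "nat \<Rightarrow> nat \<Rightarrow> real \<Rightarrow> real \<Rightarrow> real^3"
  assumes T_pos: "T > 0"
    and D00: "\<And>s t. s \<ge> 0 \<Longrightarrow> t \<in> {0..T} \<Longrightarrow> D 0 0 s t = v s t"
    and D_s: "\<And>j k s t. s \<ge> 0 \<Longrightarrow> t \<in> {0..T} \<Longrightarrow>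
               ((\<lambda>\<sigma>. D j k \<sigma> t) has_vector_derivative D (Suc j) k s t) (at s within {0..})"
    and D_t: "\<And>j k s t. s \<ge> 0 \<Longrightarrow> t \<in> {0..T} \<Longrightarrow>
               ((\<lambda>\<tau>. D j k s \<tau>) has_vector_derivative D j (Suc k) s t) (at t within {0..T})"
    and D_cont: "\<And>j k. continuous_on {(s, t). s \<ge> 0 \<and> t \<in> {0..T}} (\<lambda>(s, t). D j k s t)"
    and pde: "\<And>s t. s > 0 \<Longrightarrow> t \<in> {0<..T} \<Longrightarrow> D 0 1 s t = cross3 (v s t) (D 2 0 s t)"
    and init: "\<And>s. s > 0 \<Longrightarrow> v s 0 = v0 s"
    and bdry: "\<And>t. t \<in> {0<..T} \<Longrightarrow> v 0 t = vector [0, 0, 1]"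
    and unit: "\<And>s. s \<ge> 0 \<Longrightarrow> norm (v0 s) = 1"
  shows "\<forall>n::nat. n \<ge> 1 \<longrightarrow> (\<forall>t \<in> {0<..T}.
           cross3 (v 0 t) (D (2 * n) 0 0 t) = 0 \<and>
           (\<forall>j l. j + l = 2 * n + 1 \<longrightarrow> D j 0 0 t \<bullet> D l 0 0 t = 0))"
proof -
  interpret schroedinger_map_ibvp T v v0 D
    using T_pos D00 D_s D_t pde init bdry unit by unfold_locales
  show ?thesis
  proof (intro allI impI ballI conjI)
    fix n :: nat and t and j l assume t: "t \<in> {0<..T}"
    show "cross3 (v 0 t) (D (2 * n) 0 0 t) = 0"
      using boundary_derivatives_parity_aligned[OF t, of "2 * n"] bdry[OF t]
      by (simp add: parity_aligned_def cross3_e3_eq_0_iff)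
    assume "j + l = 2 * n + 1"
    then show "D j 0 0 t \<bullet> D l 0 0 t = 0"
      using inner_eq_0_if_odd_parity[OF boundary_derivatives_parity_aligned[OF t, of j]
          boundary_derivatives_parity_aligned[OF t, of l]] by simp
  qed
qed

end
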